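(* Let $d\in\mathbb{N}$. Then for any integer $k\geq 19^{2d-1}+1$ and any step preserving continuous map $F\colon S_{\ell_\infty^k}\to S_{\ell_1^k}$ such that $F(1,\ldots,1)\neq F(-1,\ldots,-1)$, we have $\omega_F(\tfrac1d)\geq\tfrac12$. In particular, there is no sequence $(F_k\colon S_{\ell_\infty^k}\to S_{\ell_1^k})_{k=1}^\infty$ of equi-uniformly continuous step preserving homeomorphisms.
   Context: For $p\in\{1,\infty\}$, $S_{\ell_p^k}$ denotes the unit sphere of $\mathbb{R}^k$ with the $\ell_p$-norm. Writing $F=(F_i)_{i=1}^k$ for the coordinate functions, $F$ is step preserving if for all $x=(x_i)_{i=1}^k\in S_{\ell_\infty^k}$ and all $i,j\in\{1,\dots,k\}$, $x_i=x_j$ implies $F_i(x)=F_j(x)$. The modulus of uniform continuity of a map $F$ between metric spaces is $\omega_F(t)=\sup\{d(F(x),F(y)): d(x,y)\le t\}$. A sequence $(F_k)_k$ is equi-uniformly continuous if for every $\varepsilon>0$ there is $\delta>0$ with $\omega_{F_k}(\delta)<\varepsilon$ for all $k$. *)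

theory Defs
  imports Complex_Main
begin

text \<open>Vectors of R^k are represented as functions nat => real vanishing at indices >= k.\<close>

definition vec_k :: "nat \<Rightarrow> (nat \<Rightarrow> real) \<Rightarrow> bool" where
  "vec_k k x \<longleftrightarrow> (\<forall>i\<ge>k. x i = 0)"

definition linf_norm :: "nat \<Rightarrow> (nat \<Rightarrow> real) \<Rightarrow> real" where
  "linf_norm k x = Max (insert 0 ((\<lambda>i. \<bar>x i\<bar>) ` {..<k}))"

definition l1_norm :: "nat \<Rightarrow> (nat \<Rightarrow> real) \<Rightarrow> real" where
  "l1_norm k x = (\<Sum>i<k. \<bar>x i\<bar>)"

definition linf_dist :: "nat \<Rightarrow> (nat \<Rightarrow> real) \<Rightarrow> (nat \<Rightarrow> real) \<Rightarrow> real" where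
  "linf_dist k x y = linf_norm k (\<lambda>i. x i - y i)"

definition l1_dist :: "nat \<Rightarrow> (nat \<Rightarrow> real) \<Rightarrow> (nat \<Rightarrow> real) \<Rightarrow> real" where
  "l1_dist k x y = l1_norm k (\<lambda>i. x i - y i)"

definition S_inf :: "nat \<Rightarrow> (nat \<Rightarrow> real) set" where
  "S_inf k = {x. vec_k k x \<and> linf_norm k x = 1}"

definition S_one :: "nat \<Rightarrow> (nat \<Rightarrow> real) set" where
  "S_one k = {x. vec_k k x \<and> l1_norm k x = 1}"

definition const_vec :: "nat \<Rightarrow> real \<Rightarrow> (nat \<Rightarrow> real)" where
  "const_vec k c = (\<lambda>i. if i < k then c else 0)"

definition cont_wrt ::
  "'a set \<Rightarrow> ('a \<Rightarrow> 'a \<Rightarrow> real) \<Rightarrow> ('b \<Rightarrow> 'b \<Rightarrow> real) \<Rightarrow> ('a \<Rightarrow> 'b) \<Rightarrow> bool" where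
  "cont_wrt A dA dB F \<longleftrightarrow>
     (\<forall>x\<in>A. \<forall>e>0. \<exists>\<delta>>0. \<forall>y\<in>A. dA x y < \<delta> \<longrightarrow> dB (F x) (F y) < e)"

definition step_preserving :: "nat \<Rightarrow> ((nat \<Rightarrow> real) \<Rightarrow> (nat \<Rightarrow> real)) \<Rightarrow> bool" where
  "step_preserving k F \<longleftrightarrow>
     (\<forall>x\<in>S_inf k. \<forall>i<k. \<forall>j<k. x i = x j \<longrightarrow> F x i = F x j)"

definition modulus :: "nat \<Rightarrow> ((nat \<Rightarrow> real) \<Rightarrow> (nat \<Rightarrow> real)) \<Rightarrow> real \<Rightarrow> real" where
  "modulus k F t = Sup {l1_dist k (F x) (F y) | x y.
      x \<in> S_inf k \<and> y \<in> S_inf k \<and> linf_dist k x y \<le> t}"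

definition homeo_k :: "nat \<Rightarrow> ((nat \<Rightarrow> real) \<Rightarrow> (nat \<Rightarrow> real)) \<Rightarrow> bool" where
  "homeo_k k F \<longleftrightarrow>
     F ` S_inf k = S_one k \<and> inj_on F (S_inf k) \<and>
     cont_wrt (S_inf k) (linf_dist k) (l1_dist k) F \<and>
     (\<exists>G. G ` S_one k = S_inf k \<and> (\<forall>x\<in>S_inf k. G (F x) = x) \<and>
          cont_wrt (S_one k) (l1_dist k) (linf_dist k) G)"

end

theory Submission
  imports Defs
begin

text \<open>
  For \<open>d \<ge> 2\<close> walk from \<open>(1,\<dots>,1)\<close> to \<open>(-1,\<dots>,-1)\<close> in
  \<open>\<ell>\<^sub>\<infinity>\<close>-steps of length at most \<open>1/d\<close> along a staircase path. The coordinates are cut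
  into blocks whose sizes grow by a factor 3, so that each block outweighs all smaller ones;
  every point of the path is constant on the last block \<open>C\<close>. At every time the smaller blocks are
  grouped into pairs of neighbours carrying equal values, and the set \<open>N\<^sub>t\<close> of lower halves
  of the pairs alternates with \<open>t\<close>, so \<open>N\<^sub>t\<close> and \<open>N\<^sub>t\<^sub>+\<^sub>1\<close> partition the complement
  of \<open>C\<close>. The largest block of a level set is never in \<open>N\<^sub>t\<close>, hence \<open>N\<^sub>t\<close> contains at most
  3/8 of every level set. A step preserving \<open>F\<close> is constant on level sets, so it puts
  \<open>\<ell>\<^sub>1\<close>-mass at most 3/8 on \<open>N\<^sub>t\<close>, and if the sum of \<open>F\<close> over \<open>C\<close> changed sign between
  consecutive times, their images would be \<open>\<ell>\<^sub>1\<close>-distance at least \<open>2 - 4 \<cdot> 3/8 = 1/2\<close>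
  apart. But step preservation forces \<open>F(-1,\<dots>,-1) = -F(1,\<dots>,1)\<close>, so that sum does change
  sign. For \<open>d = 1\<close> a path with three steps and the triangle inequality suffice. For the second claim, injectivity gives
  \<open>F(1,\<dots>,1) \<noteq> F(-1,\<dots>,-1)\<close>, and \<open>d\<close>, hence \<open>k\<close>, can be chosen as large as needed.
\<close>

section \<open>Unit spheres and the modulus of continuity\<close>

lemma linf_dist_le: "0 \<le> r \<Longrightarrow> (\<And>i. i < k \<Longrightarrow> \<bar>x i - y i\<bar> \<le> r) \<Longrightarrow> linf_dist k x y \<le> r"
  unfolding linf_dist_def linf_norm_def by (intro Max.boundedI) auto

lemma S_infI:
  assumes "vec_k k x" "\<And>i. i < k \<Longrightarrow> \<bar>x i\<bar> \<le> 1" "j < k" "\<bar>x j\<bar> = 1"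
  shows "x \<in> S_inf k"
proof -
  have "\<bar>x j\<bar> \<le> linf_norm k x"
    unfolding linf_norm_def using assms(3) by (intro Max_ge) auto
  moreover have "linf_norm k x \<le> 1"
    unfolding linf_norm_def using assms(2) by (intro Max.boundedI) auto
  ultimately show ?thesis
    using assms(1,4) by (simp add: S_inf_def)
qed

lemma const_vec_in_S_inf: "0 < k \<Longrightarrow> \<bar>c\<bar> = 1 \<Longrightarrow> const_vec k c \<in> S_inf k"
  by (rule S_infI[where j = 0]) (auto simp: vec_k_def const_vec_def)

lemma sum_abs_S_one: "x \<in> S_one k \<Longrightarrow> (\<Sum>i<k. \<bar>x i\<bar>) = 1"
  by (simp add: S_one_def l1_norm_def)

lemma l1_dist_le_2: "u \<in> S_one k \<Longrightarrow> v \<in> S_one k \<Longrightarrow> l1_dist k u v \<le> 2"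
proof -
  assume uv: "u \<in> S_one k" "v \<in> S_one k"
  have "l1_dist k u v \<le> (\<Sum>i<k. \<bar>u i\<bar> + \<bar>v i\<bar>)"
    unfolding l1_dist_def l1_norm_def by (rule sum_mono) auto
  also have "\<dots> = 2"
    using uv by (simp add: sum.distrib sum_abs_S_one)
  finally show ?thesis .
qed

lemma l1_dist_triangle: "l1_dist k u w \<le> l1_dist k u v + l1_dist k v w"
  unfolding l1_dist_def l1_norm_def sum.distrib[symmetric] by (rule sum_mono) auto

lemma bdd_above_modulus_set:
  assumes "F ` S_inf k \<subseteq> S_one k"
  shows "bdd_above {l1_dist k (F x) (F y) | x y. x \<in> S_inf k \<and> y \<in> S_inf k \<and> linf_dist k x y \<le> t}"
  using assms by (intro bdd_aboveI[where M = 2]) (auto intro!: l1_dist_le_2)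

lemma l1_dist_le_modulus:
  assumes "F ` S_inf k \<subseteq> S_one k" "x \<in> S_inf k" "y \<in> S_inf k" "linf_dist k x y \<le> t"
  shows "l1_dist k (F x) (F y) \<le> modulus k F t"
  unfolding modulus_def
proof (rule cSup_upper)
  show "bdd_above {l1_dist k (F x) (F y) | x y. x \<in> S_inf k \<and> y \<in> S_inf k \<and> linf_dist k x y \<le> t}"
    using assms(1) by (rule bdd_above_modulus_set)
qed (use assms(2-4) in blast)

lemma modulus_mono:
  assumes "F ` S_inf k \<subseteq> S_one k" "0 < k" "0 \<le> s" "s \<le> t"
  shows "modulus k F s \<le> modulus k F t"
  unfolding modulus_def
proof (rule cSup_subset_mono)
  have "const_vec k 1 \<in> S_inf k" "linf_dist k (const_vec k 1) (const_vec k 1) \<le> s"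
    using assms(2,3) by (auto intro: const_vec_in_S_inf linf_dist_le)
  then show "{l1_dist k (F x) (F y) | x y. x \<in> S_inf k \<and> y \<in> S_inf k \<and> linf_dist k x y \<le> s} \<noteq> {}"
    by blast
  show "bdd_above {l1_dist k (F x) (F y) | x y. x \<in> S_inf k \<and> y \<in> S_inf k \<and> linf_dist k x y \<le> t}"
    using assms(1) by (rule bdd_above_modulus_set)
  show "{l1_dist k (F x) (F y) | x y. x \<in> S_inf k \<and> y \<in> S_inf k \<and> linf_dist k x y \<le> s}
    \<subseteq> {l1_dist k (F x) (F y) | x y. x \<in> S_inf k \<and> y \<in> S_inf k \<and> linf_dist k x y \<le> t}"
    using assms(4) by fastforce
qed

section \<open>Step preserving maps\<close>

lemma step_preservingD:
  "step_preserving k F \<Longrightarrow> x \<in> S_inf k \<Longrightarrow> i < k \<Longrightarrow> j < k \<Longrightarrow> x i = x j \<Longrightarrow> F x i = F x j"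
  unfolding step_preserving_def by blast

lemma step_preserving_const_vec:
  assumes FS: "F ` S_inf k \<subseteq> S_one k" and SP: "step_preserving k F" and "0 < k" "\<bar>c\<bar> = 1"
  obtains v where "F (const_vec k c) = const_vec k v" "real k * \<bar>v\<bar> = 1"
proof -
  let ?x = "const_vec k c"
  have x: "?x \<in> S_inf k" using assms by (simp add: const_vec_in_S_inf)
  then have Fx: "F ?x \<in> S_one k" using FS by blast
  have same: "F ?x i = F ?x 0" if "i < k" for i
    using step_preservingD[OF SP x that \<open>0 < k\<close>] that \<open>0 < k\<close> by (simp add: const_vec_def)
  have "F ?x = const_vec k (F ?x 0)"
  proof
    fix i
    show "F ?x i = const_vec k (F ?x 0) i"
      using same[of i] Fx by (auto simp: const_vec_def S_one_def vec_k_def)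
  qed
  moreover have "(\<Sum>i<k. \<bar>F ?x i\<bar>) = (\<Sum>i<k. \<bar>F ?x 0\<bar>)"
    using same by (intro sum.cong refl) (metis lessThan_iff)
  then have "real k * \<bar>F ?x 0\<bar> = 1"
    using sum_abs_S_one[OF Fx] by simp
  ultimately show ?thesis by (rule that)
qed

lemma step_preserving_antipodal:
  assumes FS: "F ` S_inf k \<subseteq> S_one k" and SP: "step_preserving k F" and "0 < k"
    and ne: "F (const_vec k 1) \<noteq> F (const_vec k (-1))"
  obtains v where "real k * \<bar>v\<bar> = 1"
    "F (const_vec k 1) = const_vec k v" "F (const_vec k (-1)) = const_vec k (-v)"
proof -
  obtain v where v: "F (const_vec k 1) = const_vec k v" "real k * \<bar>v\<bar> = 1"
    using step_preserving_const_vec[OF FS SP \<open>0 < k\<close>, of 1] by auto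
  obtain w where w: "F (const_vec k (-1)) = const_vec k w" "real k * \<bar>w\<bar> = 1"
    using step_preserving_const_vec[OF FS SP \<open>0 < k\<close>, of "-1"] by auto
  have "v \<noteq> w" using ne v(1) w(1) by auto
  moreover have "\<bar>v\<bar> = \<bar>w\<bar>"
    using v(2) w(2) \<open>0 < k\<close> by (metis mult_left_cancel mult_zero_left zero_neq_one)
  ultimately have "w = - v" by (cases "v \<ge> 0"; cases "w \<ge> 0") auto
  then show ?thesis using v w by (intro that[of v]) simp_all
qed

lemma sum_abs_le_level_fraction:
  fixes f x :: "nat \<Rightarrow> real"
  assumes level: "\<And>i j. i < k \<Longrightarrow> j < k \<Longrightarrow> x i = x j \<Longrightarrow> f i = f j"
    and N: "N \<subseteq> {..<k}"
    and fraction: "\<And>j. j < k \<Longrightarrow>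
      real (card {i\<in>N. x i = x j}) \<le> q * real (card {i. i < k \<and> x i = x j})"
  shows "(\<Sum>i\<in>N. \<bar>f i\<bar>) \<le> q * (\<Sum>i<k. \<bar>f i\<bar>)"
proof -
  let ?L = "\<lambda>v. {i\<in>{..<k}. x i = v}"
  have level_sum: "(\<Sum>i\<in>A. \<bar>f i\<bar>) = real (card A) * \<bar>f j\<bar>"
    if A: "A \<subseteq> ?L (x j)" and j: "j < k" for A j
  proof -
    have "finite A" using A finite_subset by fastforce
    moreover have "\<bar>f i\<bar> = \<bar>f j\<bar>" if "i \<in> A" for i
    proof -
      have "i < k" "x i = x j" using A that by auto
      then show ?thesis using level j by metis
    qed
    ultimately show ?thesis by simp
  qed
  have "(\<Sum>i\<in>N. \<bar>f i\<bar>) = (\<Sum>i<k. if i \<in> N then \<bar>f i\<bar> else 0)"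
    using sum.inter_restrict[of "{..<k}" "\<lambda>i. \<bar>f i\<bar>" N] N by (simp add: Int_absorb1)
  also have "\<dots> = (\<Sum>v\<in>x ` {..<k}. \<Sum>i\<in>?L v. if i \<in> N then \<bar>f i\<bar> else 0)"
    by (rule sum.image_gen) simp
  also have "\<dots> \<le> (\<Sum>v\<in>x ` {..<k}. q * (\<Sum>i\<in>?L v. \<bar>f i\<bar>))"
  proof (rule sum_mono)
    fix v assume "v \<in> x ` {..<k}"
    then obtain j where j: "j < k" "v = x j" by blast
    have "(\<Sum>i\<in>?L v. if i \<in> N then \<bar>f i\<bar> else 0) = (\<Sum>i\<in>?L v \<inter> N. \<bar>f i\<bar>)"
      by (simp add: sum.inter_restrict)
    also have "?L v \<inter> N = {i\<in>N. x i = x j}"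
      using N j by auto
    also have "(\<Sum>i\<in>{i\<in>N. x i = x j}. \<bar>f i\<bar>) = real (card {i\<in>N. x i = x j}) * \<bar>f j\<bar>"
      using N j by (intro level_sum) auto
    also have "\<dots> \<le> q * real (card (?L (x j))) * \<bar>f j\<bar>"
      using fraction[OF j(1)] by (intro mult_right_mono) auto
    also have "\<dots> = q * (\<Sum>i\<in>?L v. \<bar>f i\<bar>)"
      using j level_sum[of "?L (x j)" j] by simp
    finally show "(\<Sum>i\<in>?L v. if i \<in> N then \<bar>f i\<bar> else 0) \<le> q * (\<Sum>i\<in>?L v. \<bar>f i\<bar>)" .
  qed
  also have "\<dots> = q * (\<Sum>v\<in>x ` {..<k}. \<Sum>i\<in>?L v. \<bar>f i\<bar>)"
    by (rule sum_distrib_left[symmetric])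
  also have "\<dots> = q * (\<Sum>i<k. \<bar>f i\<bar>)"
    by (subst sum.image_gen[of "{..<k}" _ x]) simp_all
  finally show ?thesis .
qed

lemma l1_dist_ge_of_sign_change:
  fixes f g :: "nat \<Rightarrow> real"
  assumes f: "(\<Sum>i<k. \<bar>f i\<bar>) = 1" and g: "(\<Sum>i<k. \<bar>g i\<bar>) = 1"
    and C: "C \<subseteq> {..<k}" and NM: "N \<inter> M = {}" "N \<union> M = {..<k} - C"
    and f_C: "\<bar>sum f C\<bar> = (\<Sum>i\<in>C. \<bar>f i\<bar>)" and g_C: "\<bar>sum g C\<bar> = (\<Sum>i\<in>C. \<bar>g i\<bar>)"
    and sign: "sum f C * sum g C \<le> 0"
  shows "2 - 2 * (\<Sum>i\<in>N. \<bar>f i\<bar>) - 2 * (\<Sum>i\<in>M. \<bar>g i\<bar>) \<le> l1_dist k f g"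
proof -
  have fin: "finite C" "finite N" "finite M"
    using finite_subset[OF C] NM(2) finite_Un[of N M] by auto
  have split: "(\<Sum>i<k. h i) = sum h C + sum h N + sum h M" for h :: "nat \<Rightarrow> real"
  proof -
    have "{..<k} = C \<union> (N \<union> M)" using C NM(2) by auto
    moreover have "C \<inter> (N \<union> M) = {}" using NM(2) by auto
    ultimately show ?thesis
      using fin NM(1) by (simp add: sum.union_disjoint)
  qed
  have "\<bar>sum f C - sum g C\<bar> = \<bar>sum f C\<bar> + \<bar>sum g C\<bar>"
    using sign by (auto simp: abs_if mult_le_0_iff)
  moreover have "\<bar>sum f C - sum g C\<bar> \<le> (\<Sum>i\<in>C. \<bar>f i - g i\<bar>)"
    by (metis sum_abs sum_subtractf)
  moreover have "(\<Sum>i\<in>N. \<bar>g i\<bar>) - (\<Sum>i\<in>N. \<bar>f i\<bar>) \<le> (\<Sum>i\<in>N. \<bar>f i - g i\<bar>)"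
    unfolding sum_subtractf[symmetric] by (rule sum_mono) auto
  moreover have "(\<Sum>i\<in>M. \<bar>f i\<bar>) - (\<Sum>i\<in>M. \<bar>g i\<bar>) \<le> (\<Sum>i\<in>M. \<bar>f i - g i\<bar>)"
    unfolding sum_subtractf[symmetric] by (rule sum_mono) auto
  moreover have "l1_dist k f g = (\<Sum>i\<in>C. \<bar>f i - g i\<bar>) + (\<Sum>i\<in>N. \<bar>f i - g i\<bar>) + (\<Sum>i\<in>M. \<bar>f i - g i\<bar>)"
    unfolding l1_dist_def l1_norm_def by (rule split)
  ultimately show ?thesis
    using f g split[of "\<lambda>i. \<bar>f i\<bar>"] split[of "\<lambda>i. \<bar>g i\<bar>"] f_C g_C by linarith
qed

lemma sign_change_step:
  fixes c :: "nat \<Rightarrow> real"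
  assumes "c 0 * c T < 0"
  shows "\<exists>t<T. c t * c (Suc t) \<le> 0"
proof (rule ccontr)
  assume "\<not> ?thesis"
  then have step: "0 < c t * c (Suc t)" if "t < T" for t
    using that by (simp add: not_le)
  have "0 < c 0 * c t" if "t \<le> T" for t
    using that
  proof (induction t)
    case 0
    then show ?case using assms by (auto simp: zero_less_mult_iff mult_less_0_iff)
  next
    case (Suc t)
    then have "0 < c 0 * c t" "0 < c t * c (Suc t)" using step by auto
    then show ?case by (auto simp: zero_less_mult_iff)
  qed
  then show False using assms by fastforce
qed

lemma step_preserving_path_jump:
  fixes X :: "nat \<Rightarrow> nat \<Rightarrow> real" and N :: "nat \<Rightarrow> nat set"
  assumes FS: "F ` S_inf k \<subseteq> S_one k" and SP: "step_preserving k F"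
    and ne: "F (const_vec k 1) \<noteq> F (const_vec k (-1))"
    and X_0: "X 0 = const_vec k 1" and X_T: "X T = const_vec k (-1)"
    and X_S: "\<And>t. t \<le> T \<Longrightarrow> X t \<in> S_inf k"
    and C: "C \<subseteq> {..<k}" "C \<noteq> {}"
    and X_C: "\<And>t i j. t \<le> T \<Longrightarrow> i \<in> C \<Longrightarrow> j \<in> C \<Longrightarrow> X t i = X t j"
    and N_alternate: "\<And>t. t < T \<Longrightarrow> N t \<inter> N (Suc t) = {} \<and> N t \<union> N (Suc t) = {..<k} - C"
    and N_fraction: "\<And>t j. t \<le> T \<Longrightarrow> j < k \<Longrightarrow>
      real (card {i\<in>N t. X t i = X t j}) \<le> q * real (card {i. i < k \<and> X t i = X t j})"
  shows "\<exists>t<T. 2 - 4 * q \<le> l1_dist k (F (X t)) (F (X (Suc t)))"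
proof -
  define c where "c t = sum (F (X t)) C" for t
  have "0 < k" using C by auto
  have finite_C: "finite C" using C(1) finite_subset by blast
  obtain v where v: "real k * \<bar>v\<bar> = 1"
    "F (const_vec k 1) = const_vec k v" "F (const_vec k (-1)) = const_vec k (-v)"
    using step_preserving_antipodal[OF FS SP \<open>0 < k\<close> ne] .
  have "c 0 = (\<Sum>i\<in>C. v)" "c T = (\<Sum>i\<in>C. - v)"
    unfolding c_def X_0 X_T v using C(1) by (intro sum.cong; force simp: const_vec_def)+
  then have "c 0 = real (card C) * v" "c T = - (real (card C) * v)"
    by simp_all
  moreover have "real (card C) * v \<noteq> 0"
    using v(1) C(2) finite_C by auto
  then have "0 < (real (card C) * v) * (real (card C) * v)"
    using not_real_square_gt_zero by blast
  ultimately have "c 0 * c T < 0"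
    by simp
  then obtain t where t: "t < T" "c t * c (Suc t) \<le> 0"
    using sign_change_step by blast
  have F_S: "F (X s) \<in> S_one k" if "s \<le> T" for s
    using FS X_S[OF that] by blast
  have F_level: "F (X s) i = F (X s) j" if "s \<le> T" "i < k" "j < k" "X s i = X s j" for s i j
    using step_preservingD[OF SP X_S] that by blast
  have c_abs: "\<bar>sum (F (X s)) C\<bar> = (\<Sum>i\<in>C. \<bar>F (X s) i\<bar>)" if "s \<le> T" for s
  proof -
    obtain i0 where "i0 \<in> C" using C(2) by blast
    then have same: "F (X s) i = F (X s) i0" if "i \<in> C" for i
      using F_level[OF \<open>s \<le> T\<close>] X_C[OF \<open>s \<le> T\<close>] C(1) that by blast
    have "sum (F (X s)) C = (\<Sum>i\<in>C. F (X s) i0)"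
      by (rule sum.cong[OF refl same])
    moreover have "(\<Sum>i\<in>C. \<bar>F (X s) i\<bar>) = (\<Sum>i\<in>C. \<bar>F (X s) i0\<bar>)"
      by (rule sum.cong[OF refl], rule arg_cong[where f = abs], rule same)
    ultimately show ?thesis by (simp add: abs_mult)
  qed
  have N_mass: "(\<Sum>i\<in>N s. \<bar>F (X s) i\<bar>) \<le> q" if "s \<le> T" "N s \<subseteq> {..<k}" for s
  proof -
    have "(\<Sum>i\<in>N s. \<bar>F (X s) i\<bar>) \<le> q * (\<Sum>i<k. \<bar>F (X s) i\<bar>)"
      by (rule sum_abs_le_level_fraction[OF F_level[OF that(1)] that(2) N_fraction[OF that(1)]])
    then show ?thesis using sum_abs_S_one[OF F_S[OF that(1)]] by simp
  qed
  have N_t: "N t \<inter> N (Suc t) = {}" "N t \<union> N (Suc t) = {..<k} - C"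
    using N_alternate[OF t(1)] by auto
  have "2 - 2 * (\<Sum>i\<in>N t. \<bar>F (X t) i\<bar>) - 2 * (\<Sum>i\<in>N (Suc t). \<bar>F (X (Suc t)) i\<bar>)
      \<le> l1_dist k (F (X t)) (F (X (Suc t)))"
    using t by (intro l1_dist_ge_of_sign_change[OF sum_abs_S_one sum_abs_S_one C(1) N_t]
        F_S c_abs) (simp_all add: c_def)
  moreover have "(\<Sum>i\<in>N t. \<bar>F (X t) i\<bar>) \<le> q" "(\<Sum>i\<in>N (Suc t). \<bar>F (X (Suc t)) i\<bar>) \<le> q"
    using N_t t(1) by (intro N_mass; force)+
  ultimately show ?thesis using t(1) by (intro exI[of _ t]) auto
qed

lemma step_preserving_jump_unit:
  assumes FS: "F ` S_inf k \<subseteq> S_one k" and SP: "step_preserving k F" and "2 \<le> k"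
    and ne: "F (const_vec k 1) \<noteq> F (const_vec k (-1))"
  shows "\<exists>x\<in>S_inf k. \<exists>y\<in>S_inf k. linf_dist k x y \<le> 1 \<and> 2 / 3 \<le> l1_dist k (F x) (F y)"
proof (rule ccontr)
  assume "\<not> ?thesis"
  then have small: "l1_dist k (F x) (F y) < 2 / 3"
    if "x \<in> S_inf k" "y \<in> S_inf k" "linf_dist k x y \<le> 1" for x y
    using that by force
  define p0 where "p0 = const_vec k 1"
  define p1 :: "nat \<Rightarrow> real" where "p1 i = (if i = 0 then 1 else 0)" for i
  define p2 :: "nat \<Rightarrow> real" where "p2 i = (if 0 < i \<and> i < k then -1 else 0)" for i
  define p3 where "p3 = const_vec k (-1)"
  have S: "p0 \<in> S_inf k" "p1 \<in> S_inf k" "p2 \<in> S_inf k" "p3 \<in> S_inf k"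
    using assms(3)
    by (auto simp: p0_def p3_def const_vec_in_S_inf
        intro!: S_infI[where j = 0 and x = p1] S_infI[where j = 1 and x = p2])
      (auto simp: p1_def p2_def vec_k_def)
  have "linf_dist k p0 p1 \<le> 1" "linf_dist k p1 p2 \<le> 1" "linf_dist k p2 p3 \<le> 1"
    by (auto intro!: linf_dist_le simp: p0_def p1_def p2_def p3_def const_vec_def)
  then have "l1_dist k (F p0) (F p3) < 2"
    using small[OF S(1,2)] small[OF S(2,3)] small[OF S(3,4)]
      l1_dist_triangle[of k "F p0" "F p3" "F p1"] l1_dist_triangle[of k "F p1" "F p3" "F p2"]
    by linarith
  moreover obtain v where v: "real k * \<bar>v\<bar> = 1"
    "F (const_vec k 1) = const_vec k v" "F (const_vec k (-1)) = const_vec k (-v)"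
    using step_preserving_antipodal[OF FS SP _ ne] assms(3) by auto
  have "l1_dist k (F p0) (F p3) = (\<Sum>i<k. 2 * \<bar>v\<bar>)"
    unfolding l1_dist_def l1_norm_def p0_def p3_def v by (intro sum.cong) (auto simp: const_vec_def)
  ultimately show False using v(1) by simp
qed

section \<open>Blocks of geometrically growing size\<close>

text \<open>
  Below \<open>block_start n\<close>, block \<open>j\<close> is \<open>[3\<^sup>j - 1, 3\<^sup>j\<^sup>+\<^sup>1 - 1)\<close>, of size \<open>2 \<cdot> 3\<^sup>j\<close>,
  which exceeds the total size of all earlier blocks; the coordinates from \<open>block_start n\<close>
  on form the last block \<open>n\<close>.
\<close>

definition block_start :: "nat \<Rightarrow> nat" where
  "block_start j = 3 ^ j - 1"

definition block_of :: "nat \<Rightarrow> nat \<Rightarrow> nat" where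
  "block_of n i = (GREATEST j. j \<le> n \<and> block_start j \<le> i)"

lemma block_start_0 [simp]: "block_start 0 = 0"
  by (simp add: block_start_def)

lemma block_start_Suc: "block_start (Suc j) = block_start j + 2 * 3 ^ j"
proof -
  have "(1 :: nat) \<le> 3 ^ j" by simp
  then show ?thesis by (simp add: block_start_def)
qed

lemma strict_mono_block_start: "strict_mono block_start"
  by (rule strict_mono_Suc_iff[THEN iffD2]) (simp add: block_start_Suc)

lemma block_of_le: "block_of n i \<le> n"
  unfolding block_of_def by (rule conjunct1[OF GreatestI_nat[of _ 0 n]]) auto

lemma block_of_less_iff:
  assumes "b \<le> n"
  shows "block_of n i < b \<longleftrightarrow> i < block_start b"
proof -
  let ?P = "\<lambda>j. j \<le> n \<and> block_start j \<le> i"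
  have "?P (block_of n i)"
    unfolding block_of_def by (rule GreatestI_nat[of _ 0 n]) auto
  moreover have "?P j \<Longrightarrow> j \<le> block_of n i" for j
    unfolding block_of_def by (rule Greatest_le_nat[of _ j n]) auto
  ultimately show ?thesis
    using assms strict_mono_less_eq[OF strict_mono_block_start] by (meson le_trans not_le)
qed

lemma block_of_eq_iff:
  assumes "b < n"
  shows "block_of n i = b \<longleftrightarrow> block_start b \<le> i \<and> i < block_start (Suc b)"
  using block_of_less_iff[of b n i] block_of_less_iff[of "Suc b" n i] assms by auto

lemma block_of_eq_last_iff: "block_of n i = n \<longleftrightarrow> block_start n \<le> i"
  using block_of_less_iff[of n n i] block_of_le[of n i] by auto

lemma block_of_block_start:
  assumes "b \<le> n"
  shows "block_of n (block_start b) = b"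
proof -
  have "\<not> block_of n (block_start b) < b"
    using block_of_less_iff[OF assms] by simp
  moreover have "block_of n (block_start b) < Suc b" if "b < n"
    using block_of_less_iff[of "Suc b" n] that strict_mono_block_start by (simp add: strict_mono_def)
  ultimately show ?thesis
    using block_of_le[of n "block_start b"] assms by (cases "b < n") auto
qed

lemma card_blocks_below:
  assumes "b \<le> n" "block_start b \<le> k"
  shows "card {i. i < k \<and> block_of n i < b} = block_start b"
proof -
  have "{i. i < k \<and> block_of n i < b} = {..<block_start b}"
    using assms(2) by (auto simp: block_of_less_iff[OF assms(1)])
  then show ?thesis by simp
qed

lemma card_block:
  assumes "b < n" "block_start (Suc b) \<le> k"
  shows "card {i. i < k \<and> block_of n i = b} = 2 * 3 ^ b"
proof -
  have "{i. i < k \<and> block_of n i = b} = {block_start b..<block_start (Suc b)}"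
    using assms(2) by (auto simp: block_of_eq_iff[OF assms(1)])
  then show ?thesis by (simp add: block_start_Suc)
qed

lemma card_last_block: "card {i. i < k \<and> block_of n i = n} = k - block_start n"
proof -
  have "{i. i < k \<and> block_of n i = n} = {block_start n..<k}"
    by (auto simp: block_of_eq_last_iff)
  then show ?thesis by simp
qed

lemma level_fraction_of_blocks:
  fixes \<beta> :: "nat \<Rightarrow> nat" and w :: "nat \<Rightarrow> 'a" and q :: real
  assumes q: "0 \<le> q" "q \<le> 1"
    and merged: "\<And>b. b \<in> P \<Longrightarrow> \<exists>i<k. \<beta> i = Suc b \<and> w (Suc b) = w b"
    and dominant: "\<And>i. i < k \<Longrightarrow> \<beta> i \<notin> P \<Longrightarrow>
      (1 - q) * card {i'. i' < k \<and> \<beta> i' < \<beta> i} \<le> q * card {i'. i' < k \<and> \<beta> i' = \<beta> i}"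
    and "j < k"
  shows "real (card {i. i < k \<and> \<beta> i \<in> P \<and> w (\<beta> i) = w (\<beta> j)})
    \<le> q * card {i. i < k \<and> w (\<beta> i) = w (\<beta> j)}"
proof -
  define L where "L = {i. i < k \<and> w (\<beta> i) = w (\<beta> j)}"
  define NL where "NL = {i. i < k \<and> \<beta> i \<in> P \<and> w (\<beta> i) = w (\<beta> j)}"
  have "finite L" "j \<in> L" using \<open>j < k\<close> by (auto simp: L_def)
  define b where "b = Max (\<beta> ` L)"
  have below_b: "\<beta> i \<le> b" if "i \<in> L" for i
    unfolding b_def using \<open>finite L\<close> that by simp
  obtain i1 where i1: "i1 \<in> L" "\<beta> i1 = b"
    unfolding b_def using Max_in[of "\<beta> ` L"] \<open>finite L\<close> \<open>j \<in> L\<close> by fastforce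
  have "b \<notin> P"
  proof
    assume "b \<in> P"
    then obtain i where "i < k" "\<beta> i = Suc b" "w (Suc b) = w b" using merged by blast
    then have "i \<in> L" using i1 by (simp add: L_def)
    then show False using below_b \<open>\<beta> i = Suc b\<close> by fastforce
  qed
  define lower where "lower = {i. i < k \<and> \<beta> i < b}"
  define B where "B = {i. i < k \<and> \<beta> i = b}"
  have "NL \<subseteq> lower"
    using below_b \<open>b \<notin> P\<close> by (fastforce simp: NL_def L_def lower_def le_less)
  then have "card NL \<le> card lower" by (intro card_mono) (simp_all add: lower_def)
  have "NL \<union> B \<subseteq> L" "NL \<inter> B = {}"
    using i1 \<open>b \<notin> P\<close> by (auto simp: NL_def B_def L_def)
  moreover have "finite NL" "finite B" by (simp_all add: NL_def B_def)
  ultimately have "card NL + card B \<le> card L"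
    using \<open>finite L\<close> by (simp add: card_mono flip: card_Un_disjoint)
  moreover have "(1 - q) * card lower \<le> q * card B"
    using dominant[of i1] i1 \<open>b \<notin> P\<close> by (simp add: L_def lower_def B_def)
  moreover have "q * card NL + q * card B \<le> q * card L" "(1 - q) * card NL \<le> (1 - q) * card lower"
    using calculation(1) \<open>card NL \<le> card lower\<close> q
    by (simp_all add: mult_left_mono flip: distrib_left of_nat_add)
  ultimately show ?thesis
    unfolding NL_def[symmetric] L_def[symmetric] by (simp add: algebra_simps)
qed

section \<open>The staircase path\<close>

text \<open>
  Before clamping to \<open>[-1, 1]\<close>, the value of block \<open>j\<close> decreases with slope
  \<open>1/(d(d+1))\<close> in \<open>t\<close>, and block \<open>j+1\<close> lies \<open>1/(d+1)\<close> above block \<open>j\<close> exactly when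
  \<open>t + j\<close> is odd: for even \<open>t + j\<close> the blocks \<open>j\<close> and \<open>j+1\<close> are merged.
\<close>

definition stair_value :: "nat \<Rightarrow> nat \<Rightarrow> nat \<Rightarrow> real" where
  "stair_value d t j = max (-1) (min 1
     (1 + (real d * (real j - of_bool (odd (t + j))) - real t) / (real d * (real d + 1))))"

lemma stair_value_Suc_diff:
  assumes "0 < d"
  shows "\<bar>stair_value d (Suc t) j - stair_value d t j\<bar> \<le> 1 / real d"
proof -
  define D where "D = real d * (real d + 1)"
  define h where "h s = real d * (real j - of_bool (odd (s + j))) - real s" for s
  have "0 < D" using assms by (simp add: D_def)
  have "\<bar>stair_value d (Suc t) j - stair_value d t j\<bar> \<le> \<bar>(1 + h (Suc t) / D) - (1 + h t / D)\<bar>"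
    unfolding stair_value_def h_def D_def by simp
  also have "\<dots> = \<bar>h (Suc t) - h t\<bar> / D"
    using \<open>0 < D\<close> by (simp add: diff_divide_distrib[symmetric])
  also have "\<dots> \<le> (real d + 1) / D"
    using \<open>0 < D\<close> by (intro divide_right_mono) (auto simp: h_def algebra_simps)
  also have "\<dots> = 1 / real d"
    by (simp add: D_def)
  finally show ?thesis .
qed

lemma stair_value_pair: "even (t + j) \<Longrightarrow> stair_value d t (Suc j) = stair_value d t j"
  by (simp add: stair_value_def)

lemma stair_value_eq_1:
  assumes "0 < d" "real t \<le> real d * (real j - of_bool (odd (t + j)))"
  shows "stair_value d t j = 1"
proof -
  have "0 \<le> (real d * (real j - of_bool (odd (t + j))) - real t) / (real d * (real d + 1))"
    using assms by simp
  then show ?thesis by (simp add: stair_value_def)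
qed

lemma stair_value_0:
  assumes "0 < d"
  shows "stair_value d 0 j = 1"
proof (rule stair_value_eq_1[OF assms])
  have "of_bool (odd j) \<le> real j"
    using odd_pos[of j] by (cases "odd j") auto
  then show "real 0 \<le> real d * (real j - of_bool (odd (0 + j)))"
    by simp
qed

lemma stair_value_eq_minus_1:
  assumes "0 < d" "real d * (real j - of_bool (odd (t + j))) + 2 * (real d * (real d + 1)) \<le> real t"
  shows "stair_value d t j = -1"
proof -
  have "(real d * (real j - of_bool (odd (t + j))) - real t) / (real d * (real d + 1)) \<le> -2"
    using assms by (simp add: divide_le_eq)
  then show ?thesis by (simp add: stair_value_def)
qed

locale staircase =
  fixes d k :: nat
  assumes d_pos: "0 < d" and k_large: "8 * 3 ^ (2 * d + 2) \<le> k"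
begin

abbreviation last_block :: nat where
  "last_block \<equiv> 2 * d + 3"

definition duration :: nat where
  "duration = 2 * d * (d + 1) + d * (2 * d + 3)"

definition path :: "nat \<Rightarrow> nat \<Rightarrow> real" where
  "path t i = (if i < k then stair_value d t (block_of last_block i) else 0)"

definition core :: "nat set" where
  "core = {block_start last_block..<k}"

definition lower_halves :: "nat \<Rightarrow> nat set" where
  "lower_halves t = {i. i < k \<and> block_of last_block i < last_block \<and> even (t + block_of last_block i)}"

lemma core_start: "block_start last_block < k" "8 * block_start last_block \<le> 3 * k"
proof -
  have "last_block = Suc (2 * d + 2)" by simp
  then have "block_start last_block = 3 * 3 ^ (2 * d + 2) - 1"
    by (simp only: block_start_def power_Suc)
  moreover have "(1 :: nat) \<le> 3 ^ (2 * d + 2)" by simp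
  ultimately show "block_start last_block < k" "8 * block_start last_block \<le> 3 * k"
    using k_large by linarith+
qed

lemma path_0: "path 0 = const_vec k 1"
  using d_pos by (intro ext) (simp add: path_def const_vec_def stair_value_0)

lemma path_duration: "path duration = const_vec k (-1)"
proof
  fix i
  have "real (block_of last_block i) \<le> real (2 * d + 3)"
    using block_of_le by (simp only: of_nat_le_iff)
  then have "real d * (real (block_of last_block i) - of_bool (odd (duration + block_of last_block i)))
      \<le> real d * (2 * real d + 3)"
    by (intro mult_left_mono) auto
  then have "stair_value d duration (block_of last_block i) = -1"
    using d_pos by (intro stair_value_eq_minus_1) (auto simp: duration_def algebra_simps)
  then show "path duration i = const_vec k (-1) i"
    by (simp add: path_def const_vec_def)
qed

lemma path_in_S_inf: "path t \<in> S_inf k"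
proof (cases "t \<le> 2 * d * (d + 1)")
  case True
  have "real t \<le> real d * (real (2 * d + 3) - of_bool (odd (t + (2 * d + 3))))"
  proof -
    have "real t \<le> real (2 * d * (d + 1))"
      using True by (simp only: of_nat_le_iff)
    also have "\<dots> = real d * (2 * real d + 2)"
      by (simp add: algebra_simps)
    also have "\<dots> \<le> real d * (real (2 * d + 3) - of_bool (odd (t + (2 * d + 3))))"
      by (intro mult_left_mono) auto
    finally show ?thesis .
  qed
  moreover have "block_of last_block (block_start last_block) = last_block"
    by (simp add: block_of_block_start)
  ultimately have "path t (block_start last_block) = 1"
    using stair_value_eq_1[OF d_pos] core_start by (simp add: path_def)
  then show ?thesis
    using core_start by (intro S_infI[where j = "block_start last_block"])
      (auto simp: vec_k_def path_def stair_value_def)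
next
  case False
  have "block_of last_block 0 = 0"
    using block_of_block_start[of 0 last_block] by simp
  moreover have "stair_value d t 0 = -1"
  proof (rule stair_value_eq_minus_1[OF d_pos])
    have "real (2 * d * (d + 1)) \<le> real t"
      using False by (simp only: of_nat_le_iff not_le less_imp_le)
    then show "real d * (real 0 - of_bool (odd (t + 0))) + 2 * (real d * (real d + 1)) \<le> real t"
      by (simp add: algebra_simps)
  qed
  ultimately have "path t 0 = -1"
    using core_start by (simp add: path_def)
  then show ?thesis
    using core_start by (intro S_infI[where j = 0]) (auto simp: vec_k_def path_def stair_value_def)
qed

lemma linf_dist_path_Suc: "linf_dist k (path t) (path (Suc t)) \<le> 1 / real d"
  using stair_value_Suc_diff[OF d_pos] by (intro linf_dist_le) (auto simp: path_def abs_minus_commute)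

lemma path_core: "i \<in> core \<Longrightarrow> j \<in> core \<Longrightarrow> path t i = path t j"
  by (simp add: core_def path_def block_of_eq_last_iff[THEN iffD2])

lemma lower_halves_alternate: "lower_halves t \<inter> lower_halves (Suc t) = {} \<and> lower_halves t \<union> lower_halves (Suc t) = {..<k} - core"
  by (auto simp: lower_halves_def core_def block_of_less_iff)

lemma core_subset: "core \<subseteq> {..<k}" and core_nonempty: "core \<noteq> {}"
  using core_start by (auto simp: core_def)

lemma block_dominates_lower:
  assumes "b \<le> last_block"
  shows "5 * card {i. i < k \<and> block_of last_block i < b} \<le> 3 * card {i. i < k \<and> block_of last_block i = b}"
proof -
  have "block_start b \<le> block_start last_block"
    using assms strict_mono_less_eq[OF strict_mono_block_start] by simp
  then have below: "card {i. i < k \<and> block_of last_block i < b} = block_start b"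
    using assms core_start by (intro card_blocks_below) auto
  show ?thesis
  proof (cases "b < last_block")
    case True
    then have "block_start (Suc b) \<le> block_start last_block"
      using strict_mono_less_eq[OF strict_mono_block_start] by simp
    then have "card {i. i < k \<and> block_of last_block i = b} = 2 * 3 ^ b"
      using True core_start by (intro card_block) auto
    then show ?thesis using below by (simp add: block_start_def)
  next
    case False
    then show ?thesis
      using below assms core_start card_last_block[of k last_block] by simp
  qed
qed

lemma lower_halves_level_fraction:
  assumes "j < k"
  shows "real (card {i\<in>lower_halves t. path t i = path t j})
    \<le> 3 / 8 * real (card {i. i < k \<and> path t i = path t j})"
proof -
  let ?\<beta> = "block_of last_block" and ?w = "stair_value d t"
  let ?P = "{b. b < last_block \<and> even (t + b)}"
  have "real (card {i. i < k \<and> ?\<beta> i \<in> ?P \<and> ?w (?\<beta> i) = ?w (?\<beta> j)})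
      \<le> 3 / 8 * card {i. i < k \<and> ?w (?\<beta> i) = ?w (?\<beta> j)}"
  proof (rule level_fraction_of_blocks[OF _ _ _ _ assms])
    show "\<exists>i<k. ?\<beta> i = Suc b \<and> ?w (Suc b) = ?w b" if "b \<in> ?P" for b
    proof (intro exI conjI)
      have "block_start (Suc b) \<le> block_start last_block"
        using that strict_mono_less_eq[OF strict_mono_block_start] by simp
      then show "block_start (Suc b) < k" using core_start by simp
      show "?\<beta> (block_start (Suc b)) = Suc b"
        using that by (intro block_of_block_start) simp
      show "?w (Suc b) = ?w b"
        using that by (simp add: stair_value_pair)
    qed
    show "(1 - 3 / 8) * card {i'. i' < k \<and> ?\<beta> i' < ?\<beta> i} \<le> 3 / 8 * card {i'. i' < k \<and> ?\<beta> i' = ?\<beta> i}"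
      for i
      using block_dominates_lower[OF block_of_le, of i] by (simp flip: of_nat_le_iff)
  qed simp_all
  moreover have "{i\<in>lower_halves t. path t i = path t j} = {i. i < k \<and> ?\<beta> i \<in> ?P \<and> ?w (?\<beta> i) = ?w (?\<beta> j)}"
    "{i. i < k \<and> path t i = path t j} = {i. i < k \<and> ?w (?\<beta> i) = ?w (?\<beta> j)}"
    using assms by (auto simp: lower_halves_def path_def)
  ultimately show ?thesis by simp
qed

lemma exists_jump:
  assumes FS: "F ` S_inf k \<subseteq> S_one k" and SP: "step_preserving k F"
    and ne: "F (const_vec k 1) \<noteq> F (const_vec k (-1))"
  shows "\<exists>x\<in>S_inf k. \<exists>y\<in>S_inf k. linf_dist k x y \<le> 1 / real d \<and> 1 / 2 \<le> l1_dist k (F x) (F y)"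
proof -
  obtain t where "2 - 4 * (3 / 8) \<le> l1_dist k (F (path t)) (F (path (Suc t)))"
    using step_preserving_path_jump[OF FS SP ne path_0 path_duration path_in_S_inf
        core_subset core_nonempty path_core lower_halves_alternate lower_halves_level_fraction] by blast
  then show ?thesis
    using path_in_S_inf linf_dist_path_Suc by fastforce
qed

end

lemma staircaseI:
  assumes "2 \<le> d" "19 ^ (2 * d - 1) < k"
  shows "staircase d k"
proof
  obtain m where m: "d = m + 2" using assms(1) by (metis add.commute le_Suc_ex)
  have "8 * (3 :: nat) ^ (2 * d + 2) = 5832 * 9 ^ m"
    by (simp add: m power_add power_mult)
  also have "\<dots> \<le> 6859 * 361 ^ m"
    by (intro mult_mono power_mono) simp_all
  also have "\<dots> = 19 ^ (2 * d - 1)"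
    by (simp add: m power_add power_mult)
  finally show "8 * 3 ^ (2 * d + 2) \<le> k" using assms(2) by linarith
qed (use assms in simp)

lemma modulus_ge_half:
  assumes "1 \<le> d" "19 ^ (2 * d - 1) + 1 \<le> k"
    and FS: "F ` S_inf k \<subseteq> S_one k" and SP: "step_preserving k F"
    and ne: "F (const_vec k 1) \<noteq> F (const_vec k (-1))"
  shows "1 / 2 \<le> modulus k F (1 / real d)"
proof -
  have "\<exists>x\<in>S_inf k. \<exists>y\<in>S_inf k. linf_dist k x y \<le> 1 / real d \<and> 1 / 2 \<le> l1_dist k (F x) (F y)"
  proof (cases "d = 1")
    case True
    then have "2 \<le> k" using assms(2) by simp
    then show ?thesis
      using step_preserving_jump_unit[OF FS SP _ ne] True by fastforce
  next
    case False
    then have "staircase d k" using assms(1,2) by (intro staircaseI) auto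
    then show ?thesis by (rule staircase.exists_jump[OF _ FS SP ne])
  qed
  then show ?thesis
    using l1_dist_le_modulus[OF FS] by (meson order_trans)
qed

lemma homeo_k_const_vec_ne:
  assumes "homeo_k k F" "0 < k"
  shows "F (const_vec k 1) \<noteq> F (const_vec k (-1))"
proof -
  have "const_vec k 1 \<noteq> const_vec k (-1)"
    using assms(2) by (metis const_vec_def one_neq_neg_one)
  then show ?thesis
    using assms const_vec_in_S_inf[of k 1] const_vec_in_S_inf[of k "-1"]
    by (auto simp: homeo_k_def inj_on_eq_iff)
qed

lemma not_equi_uniformly_continuous_step_preserving_homeos:
  assumes "\<forall>k\<ge>1. homeo_k k (Fs k) \<and> step_preserving k (Fs k)"
  shows "\<not> (\<forall>\<epsilon>>0. \<exists>\<delta>>0. \<forall>k\<ge>1. modulus k (Fs k) \<delta> < \<epsilon>)"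
proof
  assume "\<forall>\<epsilon>>0. \<exists>\<delta>>0. \<forall>k\<ge>1. modulus k (Fs k) \<delta> < \<epsilon>"
  then obtain \<delta> :: real where "0 < \<delta>" and \<delta>: "\<forall>k\<ge>1. modulus k (Fs k) \<delta> < 1 / 2"
    by (meson zero_less_divide_1_iff zero_less_numeral)
  obtain e :: nat where e: "1 / \<delta> < real e"
    using reals_Archimedean2 by blast
  moreover have "0 < 1 / \<delta>" using \<open>0 < \<delta>\<close> by simp
  ultimately have "0 < real e" by linarith
  then have "1 \<le> e" "1 / real e \<le> \<delta>"
    using e \<open>0 < \<delta>\<close> by (auto simp: field_simps)
  define k :: nat where "k = 19 ^ (2 * e - 1) + 1"
  have "1 \<le> k" by (simp add: k_def)
  then have F: "homeo_k k (Fs k)" "step_preserving k (Fs k)" and FS: "Fs k ` S_inf k \<subseteq> S_one k"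
    using assms by (auto simp: homeo_k_def)
  have "1 / 2 \<le> modulus k (Fs k) (1 / real e)"
    using homeo_k_const_vec_ne[OF F(1)] \<open>1 \<le> k\<close> \<open>1 \<le> e\<close>
    by (intro modulus_ge_half[OF _ _ FS F(2)]) (auto simp: k_def)
  also have "\<dots> \<le> modulus k (Fs k) \<delta>"
    using \<open>1 \<le> k\<close> \<open>1 / real e \<le> \<delta>\<close> by (intro modulus_mono[OF FS]) auto
  also have "\<dots> < 1 / 2"
    using \<delta> \<open>1 \<le> k\<close> by blast
  finally show False by simp
qed

theorem theorem1p4:
  fixes d :: nat
  assumes "d \<ge> 1"
  shows "(\<forall>k :: nat. \<forall>F. k \<ge> 19 ^ (2 * d - 1) + 1
            \<longrightarrow> F ` S_inf k \<subseteq> S_one k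
            \<longrightarrow> cont_wrt (S_inf k) (linf_dist k) (l1_dist k) F
            \<longrightarrow> step_preserving k F
            \<longrightarrow> F (const_vec k 1) \<noteq> F (const_vec k (-1))
            \<longrightarrow> modulus k F (1 / real d) \<ge> 1 / 2)
       \<and> \<not> (\<exists>Fs :: nat \<Rightarrow> (nat \<Rightarrow> real) \<Rightarrow> (nat \<Rightarrow> real).
            (\<forall>k\<ge>1. homeo_k k (Fs k) \<and> step_preserving k (Fs k)) \<and>
            (\<forall>\<epsilon>>0. \<exists>\<delta>>0. \<forall>k\<ge>1. modulus k (Fs k) \<delta> < \<epsilon>))"
  using modulus_ge_half[OF assms] not_equi_uniformly_continuous_step_preserving_homeos by blast

end
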